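(* Let $\mathcal{T}$ be a pattern set on an image $I$, let $I_0\subseteq I$ be a subimage, and let $\mathcal{M}=\{T\cap I_0\mid T\in\mathcal{T}\}$ (assumed to be a pattern set on $I_0$). Then for $L\in\{\mathrm{OR},\mathrm{SUM},\mathrm{OR2},\mathrm{SUM2}\}$, $L(\mathcal{M})\leqslant L(\mathcal{T})$.
   Context: Image: a finite set $I$ of pixel variables; a subimage is a subset of $I$. A pattern is a nonempty subset of the image; a pattern set $\mathcal{T}=\{T_k\}_{k=1}^m$ is a nonempty set of $m$ distinct patterns; computing it means computing simultaneously $y_k=\sum_{p\in T_k}p$ for a commutative semigroup operation. A circuit is a directed acyclic graph with one input node of fanin zero per pixel and $m$ output nodes of fanout zero; each node of nonzero fanin (gate) may have any positive number of incoming edges and computes the semigroup sum of its in-neighbours. Size = number of edges. A circuit computes $\mathcal{T}$ if for all input values each output $y_k$ equals $\sum_{p\in T_k}p$. $\mathrm{OR}(\mathcal{T})$ (resp. $\mathrm{SUM}(\mathcal{T})$) is the minimal size of a circuit computing $\mathcal{T}$ over $(\{0,1\},\vee)$ (resp. $(\mathbb{N},+)$). $\mathrm{OR2}(\mathcal{T})$ (resp. $\mathrm{SUM2}(\mathcal{T})$) is the minimal number of gates of a circuit computing $\mathcal{T}$ over $(\{0,1\},\vee)$ (resp. $(\mathbb{N},+)$) in which every node has fanin at most $2$. *)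

theory Defs
  imports Main
begin

definition pattern_set :: "'p set \<Rightarrow> 'p set set \<Rightarrow> bool" where
  "pattern_set I \<T> \<longleftrightarrow> finite I \<and> finite \<T> \<and> \<T> \<noteq> {} \<and>
     (\<forall>T\<in>\<T>. T \<noteq> {} \<and> T \<subseteq> I)"

definition is_circuit :: "'p set \<Rightarrow> 'p set set \<Rightarrow> nat set \<Rightarrow> (nat \<times> nat) set
    \<Rightarrow> ('p \<Rightarrow> nat) \<Rightarrow> ('p set \<Rightarrow> nat) \<Rightarrow> bool" where
  "is_circuit I \<T> V E inp out \<longleftrightarrow>
     finite V \<and> E \<subseteq> V \<times> V \<and> acyclic E \<and>
     inj_on inp I \<and> inp ` I \<subseteq> V \<and> (\<forall>p\<in>I. \<forall>u. (u, inp p) \<notin> E) \<and>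
     (\<forall>v\<in>V. (\<forall>u. (u, v) \<notin> E) \<longrightarrow> v \<in> inp ` I) \<and>
     inj_on out \<T> \<and> out ` \<T> \<subseteq> V \<and> (\<forall>T\<in>\<T>. \<forall>w. (out T, w) \<notin> E)"

definition computes_or :: "'p set \<Rightarrow> 'p set set \<Rightarrow> nat set \<Rightarrow> (nat \<times> nat) set
    \<Rightarrow> ('p \<Rightarrow> nat) \<Rightarrow> ('p set \<Rightarrow> nat) \<Rightarrow> bool" where
  "computes_or I \<T> V E inp out \<longleftrightarrow>
     (\<forall>(x :: 'p \<Rightarrow> bool) (val :: nat \<Rightarrow> bool).
        (\<forall>p\<in>I. val (inp p) = x p) \<and>
        (\<forall>g\<in>V. (\<exists>u. (u, g) \<in> E) \<longrightarrow> val g = (\<exists>u. (u, g) \<in> E \<and> val u))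
        \<longrightarrow> (\<forall>T\<in>\<T>. val (out T) = (\<exists>p\<in>T. x p)))"

definition computes_sum :: "'p set \<Rightarrow> 'p set set \<Rightarrow> nat set \<Rightarrow> (nat \<times> nat) set
    \<Rightarrow> ('p \<Rightarrow> nat) \<Rightarrow> ('p set \<Rightarrow> nat) \<Rightarrow> bool" where
  "computes_sum I \<T> V E inp out \<longleftrightarrow>
     (\<forall>(x :: 'p \<Rightarrow> nat) (val :: nat \<Rightarrow> nat).
        (\<forall>p\<in>I. val (inp p) = x p) \<and>
        (\<forall>g\<in>V. (\<exists>u. (u, g) \<in> E) \<longrightarrow> val g = (\<Sum>u\<in>{u. (u, g) \<in> E}. val u))
        \<longrightarrow> (\<forall>T\<in>\<T>. val (out T) = (\<Sum>p\<in>T. x p)))"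

definition fanin_le2 :: "nat set \<Rightarrow> (nat \<times> nat) set \<Rightarrow> bool" where
  "fanin_le2 V E \<longleftrightarrow> (\<forall>v\<in>V. card {u. (u, v) \<in> E} \<le> 2)"

definition num_gates :: "nat set \<Rightarrow> (nat \<times> nat) set \<Rightarrow> nat" where
  "num_gates V E = card {v\<in>V. \<exists>u. (u, v) \<in> E}"

definition OR_cc :: "'p set \<Rightarrow> 'p set set \<Rightarrow> nat" where
  "OR_cc I \<T> = (LEAST s. \<exists>V E inp out. is_circuit I \<T> V E inp out \<and>
      computes_or I \<T> V E inp out \<and> s = card E)"

definition SUM_cc :: "'p set \<Rightarrow> 'p set set \<Rightarrow> nat" where
  "SUM_cc I \<T> = (LEAST s. \<exists>V E inp out. is_circuit I \<T> V E inp out \<and>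
      computes_sum I \<T> V E inp out \<and> s = card E)"

definition OR2_cc :: "'p set \<Rightarrow> 'p set set \<Rightarrow> nat" where
  "OR2_cc I \<T> = (LEAST s. \<exists>V E inp out. is_circuit I \<T> V E inp out \<and> fanin_le2 V E \<and>
      computes_or I \<T> V E inp out \<and> s = num_gates V E)"

definition SUM2_cc :: "'p set \<Rightarrow> 'p set set \<Rightarrow> nat" where
  "SUM2_cc I \<T> = (LEAST s. \<exists>V E inp out. is_circuit I \<T> V E inp out \<and> fanin_le2 V E \<and>
      computes_sum I \<T> V E inp out \<and> s = num_gates V E)"

end

theory Submission
  imports Defs "HOL-Library.Nat_Bijection"
begin

text \<open>Keep only the part of a circuit for \<T> that is reachable from the pixels of I0.
  Every output survives because its pattern meets I0, and a valuation of the pruned circuit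
  extends to the whole circuit by giving the discarded nodes the value False (resp. 0); so the
  pruned circuit computes the restricted patterns with no more edges and no more gates.
  The minima in the definitions of the complexity measures are attained because every
  pattern set has a circuit of fanin 2 (one chain of gates per pattern).\<close>

lemma Least_le_Least:
  fixes P Q :: "'a::wellorder \<Rightarrow> bool"
  assumes "\<exists>s. P s" and "\<And>s. P s \<Longrightarrow> \<exists>r\<le>s. Q r"
  shows "(LEAST r. Q r) \<le> (LEAST s. P s)"
proof -
  have "P (LEAST s. P s)" using assms(1) by (rule LeastI_ex)
  then obtain r where "r \<le> (LEAST s. P s)" "Q r" using assms(2) by blast
  then show ?thesis using Least_le order_trans by metis
qed

locale circuit =
  fixes I :: "'p set" and \<T> :: "'p set set" and V :: "nat set" and E :: "(nat \<times> nat) set"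
    and inp :: "'p \<Rightarrow> nat" and out :: "'p set \<Rightarrow> nat"
  assumes is_circuit: "is_circuit I \<T> V E inp out"
begin

lemma finite_V: "finite V"
  and edges_subset: "E \<subseteq> V \<times> V"
  and acyclic_E: "acyclic E"
  and inj_inp: "inj_on inp I"
  and inp_in_V: "inp ` I \<subseteq> V"
  and no_edge_into_input: "p \<in> I \<Longrightarrow> (u, inp p) \<notin> E"
  and source_is_input: "v \<in> V \<Longrightarrow> \<forall>u. (u, v) \<notin> E \<Longrightarrow> v \<in> inp ` I"
  and inj_out: "inj_on out \<T>"
  and out_in_V: "out ` \<T> \<subseteq> V"
  and no_edge_from_output: "T \<in> \<T> \<Longrightarrow> (out T, w) \<notin> E"
  using is_circuit unfolding is_circuit_def by simp_all

lemma finite_E: "finite E"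
  using finite_V edges_subset by (meson finite_SigmaI finite_subset)

lemma wf_E: "wf E"
  using finite_E acyclic_E by (rule finite_acyclic_wf)

lemma finite_preds: "finite {u. (u, v) \<in> E}"
proof -
  have "{u. (u, v) \<in> E} = fst ` (E \<inter> {e. snd e = v})" by force
  then show ?thesis using finite_E by simp
qed

text \<open>Since the circuit is acyclic, gate values can be defined by well-founded recursion
  along the edges.\<close>
lemma sum_valuation_exists:
  fixes x :: "'p \<Rightarrow> 'a::comm_monoid_add"
  shows "\<exists>val. (\<forall>p\<in>I. val (inp p) = x p) \<and>
     (\<forall>g. (\<exists>u. (u, g) \<in> E) \<longrightarrow> val g = (\<Sum>u\<in>{u. (u, g) \<in> E}. val u))"
proof -
  define F where "F f g = (if \<exists>u. (u, g) \<in> E then \<Sum>u\<in>{u. (u, g) \<in> E}. f u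
    else x (inv_into I inp g))" for f g
  have "adm_wf E F" unfolding adm_wf_def F_def by (auto intro: sum.cong)
  then have wfrec_unfold: "wfrec E F g = F (wfrec E F) g" for g
    using wfrec_fixpoint[OF wf_E] by metis
  show ?thesis
    by (rule exI[of _ "wfrec E F"])
      (use wfrec_unfold no_edge_into_input inj_inp in \<open>auto simp: F_def\<close>)
qed

end

locale circuit_restriction = circuit +
  fixes I0 :: "'p set"
  assumes I0_subset: "I0 \<subseteq> I"
begin

definition reached :: "nat set" where
  "reached = E\<^sup>* `` inp ` I0"

lemma reached_step: "u \<in> reached \<Longrightarrow> (u, v) \<in> E \<Longrightarrow> v \<in> reached"
  unfolding reached_def by (meson Image_iff rtrancl.rtrancl_into_rtrancl)

lemma reached_pred:
  assumes "v \<in> reached" "v \<notin> inp ` I0"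
  obtains u where "(u, v) \<in> E" "u \<in> reached"
proof -
  obtain q where q: "q \<in> I0" "(inp q, v) \<in> E\<^sup>*" using assms(1) unfolding reached_def by blast
  from q(2) assms(2) q(1) show ?thesis
    by (cases rule: rtranclE) (use that in \<open>auto simp: reached_def\<close>)
qed

lemma input_reached_iff: "p \<in> I \<Longrightarrow> inp p \<in> reached \<longleftrightarrow> p \<in> I0"
proof
  assume p: "p \<in> I" and "inp p \<in> reached"
  then obtain q where q: "q \<in> I0" "(inp q, inp p) \<in> E\<^sup>*" unfolding reached_def by blast
  from q(2) have "inp q = inp p"
    by (cases rule: rtranclE) (use no_edge_into_input[OF p] in auto)
  then show "p \<in> I0" using inj_inp p q(1) I0_subset unfolding inj_on_def by blast
qed (auto simp: reached_def)

lemma gate_not_input: "(u, g) \<in> E \<Longrightarrow> g \<notin> inp ` I0"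
  using no_edge_into_input I0_subset by blast

lemma reached_iff_reached_pred:
  assumes "(u, g) \<in> E"
  shows "g \<in> reached \<longleftrightarrow> (\<exists>u. (u, g) \<in> E \<and> u \<in> reached)"
proof
  assume "g \<in> reached"
  then obtain u' where "(u', g) \<in> E" "u' \<in> reached"
    using gate_not_input[OF assms] by (rule reached_pred)
  then show "\<exists>u. (u, g) \<in> E \<and> u \<in> reached" by blast
qed (use reached_step in blast)

text \<open>With the indicator of I0 as input, reachability from I0 is itself a valuation
  over ({0,1}, or).\<close>
lemma outputs_reached_if_computes_or:
  assumes computes: "computes_or I \<T> V E inp out" and meets: "\<forall>T\<in>\<T>. T \<inter> I0 \<noteq> {}"
  shows "out ` \<T> \<subseteq> reached"
proof -
  have "\<forall>g\<in>V. (\<exists>u. (u, g) \<in> E) \<longrightarrow> (g \<in> reached) = (\<exists>u. (u, g) \<in> E \<and> u \<in> reached)"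
    using reached_iff_reached_pred by blast
  moreover have "\<forall>p\<in>I. (inp p \<in> reached) = (p \<in> I0)"
    using input_reached_iff by blast
  ultimately have "\<forall>T\<in>\<T>. (out T \<in> reached) = (\<exists>p\<in>T. p \<in> I0)"
    using computes[unfolded computes_or_def, rule_format,
        where x = "\<lambda>p. p \<in> I0" and val = "\<lambda>v. v \<in> reached"]
    by blast
  then show ?thesis using meets by blast
qed

text \<open>Over the naturals, with the indicator of I0 as input, a nonzero value can only
  propagate along edges from I0.\<close>
lemma outputs_reached_if_computes_sum:
  assumes computes: "computes_sum I \<T> V E inp out"
    and meets: "\<forall>T\<in>\<T>. T \<inter> I0 \<noteq> {}" and finite_patterns: "\<forall>T\<in>\<T>. finite T"
  shows "out ` \<T> \<subseteq> reached"
proof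
  define x where "x p = (if p \<in> I0 then 1 else 0 :: nat)" for p
  obtain val where val_inp: "\<forall>p\<in>I. val (inp p) = x p"
    and val_gate: "\<forall>g. (\<exists>u. (u, g) \<in> E) \<longrightarrow> val g = (\<Sum>u\<in>{u. (u, g) \<in> E}. val u)"
    using sum_valuation_exists by blast
  have nonzero_reached: "v \<in> V \<Longrightarrow> val v \<noteq> 0 \<Longrightarrow> v \<in> reached" for v
  proof (induction v rule: wf_induct_rule[OF wf_E])
    case (1 v)
    show ?case
    proof (cases "\<exists>u. (u, v) \<in> E")
      case True
      then obtain u where u: "(u, v) \<in> E" "val u \<noteq> 0"
        using val_gate 1(3) by (metis (no_types, lifting) mem_Collect_eq sum.neutral)
      then have "u \<in> reached" using 1(1) edges_subset by blast
      then show ?thesis using reached_step u(1) by blast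
    next
      case False
      then obtain p where "p \<in> I" "v = inp p" using 1(2) source_is_input by blast
      then show ?thesis
        using val_inp 1(3) input_reached_iff unfolding x_def by (auto split: if_splits)
    qed
  qed
  fix v assume "v \<in> out ` \<T>"
  then obtain T where T: "T \<in> \<T>" "v = out T" by blast
  have "val (out T) = (\<Sum>p\<in>T. x p)"
    using computes[unfolded computes_sum_def, rule_format, where x = x and val = val]
      val_inp val_gate T(1)
    by blast
  moreover have "(\<Sum>p\<in>T. x p) \<noteq> 0"
    using meets finite_patterns T(1) by (auto simp: x_def)
  ultimately show "v \<in> reached" using nonzero_reached out_in_V T by auto
qed

definition restricted_V :: "nat set" where
  "restricted_V = V \<inter> reached"

definition restricted_E :: "(nat \<times> nat) set" where
  "restricted_E = E \<inter> reached \<times> reached"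

definition restricted_out :: "'p set \<Rightarrow> nat" where
  "restricted_out = out \<circ> inv_into \<T> (\<lambda>T. T \<inter> I0)"

lemma restricted_preds: "g \<in> reached \<Longrightarrow> {u. (u, g) \<in> restricted_E} = {u. (u, g) \<in> E} \<inter> reached"
  unfolding restricted_E_def by blast

lemma restricted_gate:
  assumes "g \<in> reached" "(u, g) \<in> E"
  shows "\<exists>u'. (u', g) \<in> restricted_E"
proof -
  obtain u' where "(u', g) \<in> E" "u' \<in> reached"
    using assms(1) gate_not_input[OF assms(2)] by (rule reached_pred)
  then show ?thesis using assms(1) unfolding restricted_E_def by blast
qed

lemma unreached_preds: "g \<notin> reached \<Longrightarrow> (u, g) \<in> E \<Longrightarrow> u \<notin> reached"
  using reached_step by blast

lemma restricted_out_witness: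
  assumes "S \<in> (\<lambda>T. T \<inter> I0) ` \<T>"
  obtains T where "T \<in> \<T>" "S = T \<inter> I0" "restricted_out S = out T"
proof
  show "inv_into \<T> (\<lambda>T. T \<inter> I0) S \<in> \<T>" using assms by (rule inv_into_into)
  show "S = inv_into \<T> (\<lambda>T. T \<inter> I0) S \<inter> I0" using f_inv_into_f[OF assms] by simp
qed (simp add: restricted_out_def)

context
  assumes out_reached: "out ` \<T> \<subseteq> reached"
begin

lemma is_circuit_restricted:
  "is_circuit I0 ((\<lambda>T. T \<inter> I0) ` \<T>) restricted_V restricted_E inp restricted_out"
  unfolding is_circuit_def
proof (intro conjI ballI allI impI)
  show "finite restricted_V" using finite_V by (simp add: restricted_V_def)
  show "restricted_E \<subseteq> restricted_V \<times> restricted_V"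
    using edges_subset by (auto simp: restricted_E_def restricted_V_def)
  show "acyclic restricted_E"
    using acyclic_E by (rule acyclic_subset) (simp add: restricted_E_def)
  show "inj_on inp I0" using inj_inp I0_subset by (rule inj_on_subset)
  show "inp ` I0 \<subseteq> restricted_V"
    using inp_in_V I0_subset by (auto simp: restricted_V_def reached_def)
  show "(u, inp p) \<notin> restricted_E" if "p \<in> I0" for p u
    using no_edge_into_input that I0_subset by (auto simp: restricted_E_def)
  show "v \<in> inp ` I0" if "v \<in> restricted_V" "\<forall>u. (u, v) \<notin> restricted_E" for v
  proof (rule ccontr)
    assume "v \<notin> inp ` I0"
    have "v \<in> reached" using that(1) by (simp add: restricted_V_def)
    then obtain u where "(u, v) \<in> E" "u \<in> reached"
      using \<open>v \<notin> inp ` I0\<close> by (rule reached_pred)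
    then show False using that \<open>v \<in> reached\<close> by (simp add: restricted_E_def)
  qed
  have "inj_on (inv_into \<T> (\<lambda>T. T \<inter> I0)) ((\<lambda>T. T \<inter> I0) ` \<T>)"
    by (rule inj_on_inv_into) simp
  moreover have "inj_on out (inv_into \<T> (\<lambda>T. T \<inter> I0) ` (\<lambda>T. T \<inter> I0) ` \<T>)"
    using inj_out by (rule inj_on_subset) (auto intro: inv_into_into)
  ultimately show "inj_on restricted_out ((\<lambda>T. T \<inter> I0) ` \<T>)"
    unfolding restricted_out_def by (rule comp_inj_on)
  show "restricted_out ` (\<lambda>T. T \<inter> I0) ` \<T> \<subseteq> restricted_V"
  proof
    fix v assume "v \<in> restricted_out ` (\<lambda>T. T \<inter> I0) ` \<T>"
    then obtain S where S: "S \<in> (\<lambda>T. T \<inter> I0) ` \<T>" "v = restricted_out S" by blast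
    obtain T where "T \<in> \<T>" "S = T \<inter> I0" "restricted_out S = out T"
      using restricted_out_witness[OF S(1)] .
    then show "v \<in> restricted_V"
      using S(2) out_reached out_in_V by (auto simp: restricted_V_def)
  qed
  show "(restricted_out S, w) \<notin> restricted_E" if S: "S \<in> (\<lambda>T. T \<inter> I0) ` \<T>" for S w
  proof -
    obtain T where "T \<in> \<T>" "S = T \<inter> I0" "restricted_out S = out T"
      using restricted_out_witness[OF S] .
    then show ?thesis using no_edge_from_output by (simp add: restricted_E_def)
  qed
qed

lemma computes_or_restricted:
  assumes "computes_or I \<T> V E inp out"
  shows "computes_or I0 ((\<lambda>T. T \<inter> I0) ` \<T>) restricted_V restricted_E inp restricted_out"
  unfolding computes_or_def
proof (intro allI impI ballI)
  fix x' :: "'p \<Rightarrow> bool" and val' :: "nat \<Rightarrow> bool" and S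
  assume val': "(\<forall>p\<in>I0. val' (inp p) = x' p) \<and>
      (\<forall>g\<in>restricted_V. (\<exists>u. (u, g) \<in> restricted_E) \<longrightarrow>
         val' g = (\<exists>u. (u, g) \<in> restricted_E \<and> val' u))"
    and S: "S \<in> (\<lambda>T. T \<inter> I0) ` \<T>"
  define x where "x p = (p \<in> I0 \<and> x' p)" for p
  define val where "val v = (v \<in> reached \<and> val' v)" for v
  have "\<forall>p\<in>I. val (inp p) = x p"
    using val' input_reached_iff by (auto simp: x_def val_def)
  moreover have "\<forall>g\<in>V. (\<exists>u. (u, g) \<in> E) \<longrightarrow> val g = (\<exists>u. (u, g) \<in> E \<and> val u)"
  proof (intro ballI impI)
    fix g assume g: "g \<in> V" "\<exists>u. (u, g) \<in> E"
    show "val g = (\<exists>u. (u, g) \<in> E \<and> val u)"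
    proof (cases "g \<in> reached")
      case True
      then have "val' g = (\<exists>u. (u, g) \<in> restricted_E \<and> val' u)"
        using val' g restricted_gate by (auto simp: restricted_V_def)
      then show ?thesis using True restricted_preds by (auto simp: val_def)
    qed (use unreached_preds in \<open>auto simp: val_def\<close>)
  qed
  ultimately have computed: "\<forall>T\<in>\<T>. val (out T) = (\<exists>p\<in>T. x p)"
    using assms[unfolded computes_or_def, rule_format, where x = x and val = val] by blast
  obtain T where T: "T \<in> \<T>" "S = T \<inter> I0" "restricted_out S = out T"
    using restricted_out_witness[OF S] .
  have "out T \<in> reached" using out_reached T(1) by blast
  then show "val' (restricted_out S) = (\<exists>p\<in>S. x' p)"
    using computed[rule_format, OF T(1)] T(2,3) by (auto simp: val_def x_def)
qed

lemma computes_sum_restricted: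
  assumes "computes_sum I \<T> V E inp out" and finite_patterns: "\<forall>T\<in>\<T>. finite T"
  shows "computes_sum I0 ((\<lambda>T. T \<inter> I0) ` \<T>) restricted_V restricted_E inp restricted_out"
  unfolding computes_sum_def
proof (intro allI impI ballI)
  fix x' :: "'p \<Rightarrow> nat" and val' :: "nat \<Rightarrow> nat" and S
  assume val': "(\<forall>p\<in>I0. val' (inp p) = x' p) \<and>
      (\<forall>g\<in>restricted_V. (\<exists>u. (u, g) \<in> restricted_E) \<longrightarrow>
         val' g = (\<Sum>u\<in>{u. (u, g) \<in> restricted_E}. val' u))"
    and S: "S \<in> (\<lambda>T. T \<inter> I0) ` \<T>"
  define x where "x p = (if p \<in> I0 then x' p else 0)" for p
  define val where "val v = (if v \<in> reached then val' v else 0)" for v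
  have "\<forall>p\<in>I. val (inp p) = x p"
    using val' input_reached_iff by (auto simp: x_def val_def)
  moreover have "\<forall>g\<in>V. (\<exists>u. (u, g) \<in> E) \<longrightarrow> val g = (\<Sum>u\<in>{u. (u, g) \<in> E}. val u)"
  proof (intro ballI impI)
    fix g assume g: "g \<in> V" "\<exists>u. (u, g) \<in> E"
    show "val g = (\<Sum>u\<in>{u. (u, g) \<in> E}. val u)"
    proof (cases "g \<in> reached")
      case True
      then have "val g = (\<Sum>u\<in>{u. (u, g) \<in> E} \<inter> reached. val' u)"
        using val' g restricted_gate restricted_preds by (auto simp: restricted_V_def val_def)
      also have "\<dots> = (\<Sum>u\<in>{u. (u, g) \<in> E}. val u)"
        unfolding val_def by (simp add: sum.If_cases finite_preds)
      finally show ?thesis .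
    qed (use unreached_preds in \<open>auto simp: val_def\<close>)
  qed
  ultimately have computed: "\<forall>T\<in>\<T>. val (out T) = (\<Sum>p\<in>T. x p)"
    using assms(1)[unfolded computes_sum_def, rule_format, where x = x and val = val] by blast
  obtain T where T: "T \<in> \<T>" "S = T \<inter> I0" "restricted_out S = out T"
    using restricted_out_witness[OF S] .
  have "out T \<in> reached" using out_reached T(1) by blast
  then have "val' (restricted_out S) = (\<Sum>p\<in>T. x p)"
    using computed[rule_format, OF T(1)] T(3) by (simp add: val_def)
  also have "\<dots> = (\<Sum>p\<in>S. x' p)"
    unfolding T(2) x_def using finite_patterns T(1) by (simp add: sum.inter_restrict)
  finally show "val' (restricted_out S) = (\<Sum>p\<in>S. x' p)" .
qed

end

lemma card_restricted_E_le: "card restricted_E \<le> card E"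
  using finite_E by (rule card_mono) (auto simp: restricted_E_def)

lemma num_gates_restricted_le: "num_gates restricted_V restricted_E \<le> num_gates V E"
  unfolding num_gates_def
  by (rule card_mono) (use finite_V in \<open>auto simp: restricted_V_def restricted_E_def\<close>)

lemma fanin_le2_restricted:
  assumes "fanin_le2 V E"
  shows "fanin_le2 restricted_V restricted_E"
  unfolding fanin_le2_def
proof
  fix v assume "v \<in> restricted_V"
  have "card {u. (u, v) \<in> restricted_E} \<le> card {u. (u, v) \<in> E}"
    using finite_preds by (rule card_mono) (auto simp: restricted_E_def)
  also have "\<dots> \<le> 2"
    using assms \<open>v \<in> restricted_V\<close> by (simp add: fanin_le2_def restricted_V_def)
  finally show "card {u. (u, v) \<in> restricted_E} \<le> 2" .
qed

end

text \<open>The chain circuit: input p is node 2 e(p), and pattern T, enumerated as a list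
  L T, gets gates 2 \<langle>t(T), j\<rangle> + 1 for j < |T|, gate j combining the first j + 1 pixels
  of the list. \<close>
locale chain_construction =
  fixes I :: "'p set" and \<T> :: "'p set set" and e :: "'p \<Rightarrow> nat" and t :: "'p set \<Rightarrow> nat"
  assumes pattern_set: "pattern_set I \<T>"
    and inj_e: "inj_on e I" and inj_t: "inj_on t \<T>"
begin

definition L :: "'p set \<Rightarrow> 'p list" where
  "L T = (SOME xs. set xs = T \<and> distinct xs)"

definition ci :: "'p \<Rightarrow> nat" where
  "ci p = 2 * e p"

definition cg :: "'p set \<Rightarrow> nat \<Rightarrow> nat" where
  "cg T j = Suc (2 * prod_encode (t T, j))"

definition cV :: "nat set" where
  "cV = ci ` I \<union> {cg T j | T j. T \<in> \<T> \<and> j < length (L T)}"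

definition cE :: "(nat \<times> nat) set" where
  "cE = {(ci (L T ! j), cg T j) | T j. T \<in> \<T> \<and> j < length (L T)} \<union>
        {(cg T j, cg T (Suc j)) | T j. T \<in> \<T> \<and> Suc j < length (L T)}"

definition cout :: "'p set \<Rightarrow> nat" where
  "cout T = cg T (length (L T) - 1)"

lemma finite_I: "finite I" and finite_\<T>: "finite \<T>"
  and pattern_subset: "T \<in> \<T> \<Longrightarrow> T \<subseteq> I" and pattern_nonempty: "T \<in> \<T> \<Longrightarrow> T \<noteq> {}"
  using pattern_set unfolding pattern_set_def by auto

lemma
  assumes "T \<in> \<T>"
  shows set_L: "set (L T) = T" and distinct_L: "distinct (L T)" and length_L_pos: "0 < length (L T)"
proof -
  have "finite T" using pattern_subset[OF assms] finite_I by (rule finite_subset)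
  then have "set (L T) = T \<and> distinct (L T)"
    unfolding L_def by (rule someI_ex[OF finite_distinct_list])
  then show "set (L T) = T" "distinct (L T)" by auto
  then show "0 < length (L T)" using pattern_nonempty[OF assms] by auto
qed

lemma L_in: "T \<in> \<T> \<Longrightarrow> j < length (L T) \<Longrightarrow> L T ! j \<in> I"
  using set_L pattern_subset nth_mem by blast

lemma ci_neq_cg [simp]: "ci p \<noteq> cg T j" "cg T j \<noteq> ci p"
  unfolding ci_def cg_def by presburger+

lemma cg_eq_iff: "T \<in> \<T> \<Longrightarrow> T' \<in> \<T> \<Longrightarrow> cg T j = cg T' j' \<longleftrightarrow> T = T' \<and> j = j'"
  unfolding cg_def using inj_t unfolding inj_on_def by auto

lemma no_edge_into_ci: "(u, ci p) \<notin> cE"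
  unfolding cE_def by auto

lemma preds_cg:
  assumes "T \<in> \<T>" "j < length (L T)"
  shows "{u. (u, cg T j) \<in> cE} =
    (if j = 0 then {ci (L T ! 0)} else {ci (L T ! j), cg T (j - 1)})"
  using assms unfolding cE_def by (auto simp: cg_eq_iff dest: gr0_implies_Suc)

lemma input_edge_cg: "T \<in> \<T> \<Longrightarrow> j < length (L T) \<Longrightarrow> (ci (L T ! j), cg T j) \<in> cE"
  unfolding cE_def by blast

lemma cg_in_cV: "T \<in> \<T> \<Longrightarrow> j < length (L T) \<Longrightarrow> cg T j \<in> cV"
  unfolding cV_def by blast

text \<open>Edges strictly increase the rank that is 0 on inputs and j + 1 on gate cg T j.\<close>
lemma acyclic_cE: "acyclic cE"
proof -
  have "cE \<subseteq> inv_image less_than (\<lambda>v. if even v then 0 else Suc (snd (prod_decode (v div 2))))"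
    unfolding cE_def ci_def cg_def by auto
  then show ?thesis
    by (rule acyclic_subset[OF wf_acyclic[OF wf_inv_image[OF wf_less_than]]])
qed

lemma is_circuit_chain: "is_circuit I \<T> cV cE ci cout"
  unfolding is_circuit_def
proof (intro conjI ballI allI impI)
  have "{cg T j | T j. T \<in> \<T> \<and> j < length (L T)} =
      (\<lambda>(T, j). cg T j) ` (SIGMA T:\<T>. {..<length (L T)})"
    by auto
  then show "finite cV" unfolding cV_def using finite_I finite_\<T> by simp
  show "cE \<subseteq> cV \<times> cV" unfolding cE_def cV_def using L_in by fastforce
  show "acyclic cE" by (rule acyclic_cE)
  show "inj_on ci I" using inj_e unfolding ci_def inj_on_def by simp
  show "ci ` I \<subseteq> cV" unfolding cV_def by blast
  show "(u, ci p) \<notin> cE" for p u by (rule no_edge_into_ci)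
  show "v \<in> ci ` I" if "v \<in> cV" "\<forall>u. (u, v) \<notin> cE" for v
    using that unfolding cV_def cE_def by blast
  show "inj_on cout \<T>" unfolding cout_def by (rule inj_onI) (simp add: cg_eq_iff)
  show "cout ` \<T> \<subseteq> cV" unfolding cout_def using length_L_pos cg_in_cV by auto
  show "(cout T, w) \<notin> cE" if "T \<in> \<T>" for T w
    using that length_L_pos[OF that] unfolding cE_def cout_def by (auto simp: cg_eq_iff)
qed

lemma fanin_le2_chain: "fanin_le2 cV cE"
  unfolding fanin_le2_def
proof
  fix v assume "v \<in> cV"
  then consider p where "v = ci p" | T j where "T \<in> \<T>" "j < length (L T)" "v = cg T j"
    unfolding cV_def by blast
  then show "card {u. (u, v) \<in> cE} \<le> 2"
  proof cases
    case 1
    then show ?thesis using no_edge_into_ci by simp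
  next
    case 2
    then show ?thesis using preds_cg[OF 2(1,2)] by (simp add: card_insert_le_m1)
  qed
qed

lemma cg_value_or:
  fixes x :: "'p \<Rightarrow> bool" and val :: "nat \<Rightarrow> bool"
  assumes val_inp: "\<forall>p\<in>I. val (ci p) = x p"
    and val_gate: "\<forall>g\<in>cV. (\<exists>u. (u, g) \<in> cE) \<longrightarrow> val g = (\<exists>u. (u, g) \<in> cE \<and> val u)"
    and T: "T \<in> \<T>"
  shows "j < length (L T) \<Longrightarrow> val (cg T j) = (\<exists>i\<le>j. x (L T ! i))"
proof (induction j)
  have gate: "val (cg T j) = (\<exists>u\<in>{u. (u, cg T j) \<in> cE}. val u)" if "j < length (L T)" for j
  proof -
    have "\<exists>u. (u, cg T j) \<in> cE" using input_edge_cg[OF T that] by blast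
    then show ?thesis using val_gate cg_in_cV[OF T that] by simp
  qed
  {
    case 0
    show ?case using gate[OF 0] val_inp L_in[OF T 0] unfolding preds_cg[OF T 0] by simp
  next
    case (Suc j)
    have "val (cg T (Suc j)) = (val (ci (L T ! Suc j)) \<or> val (cg T j))"
      using gate[OF Suc.prems] unfolding preds_cg[OF T Suc.prems] by simp
    then show ?case using val_inp L_in[OF T Suc.prems] Suc by (auto simp: le_Suc_eq)
  }
qed

lemma cg_value_sum:
  fixes x :: "'p \<Rightarrow> nat" and val :: "nat \<Rightarrow> nat"
  assumes val_inp: "\<forall>p\<in>I. val (ci p) = x p"
    and val_gate: "\<forall>g\<in>cV. (\<exists>u. (u, g) \<in> cE) \<longrightarrow> val g = (\<Sum>u\<in>{u. (u, g) \<in> cE}. val u)"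
    and T: "T \<in> \<T>"
  shows "j < length (L T) \<Longrightarrow> val (cg T j) = (\<Sum>i\<le>j. x (L T ! i))"
proof (induction j)
  case 0
  then show ?case
    using val_gate cg_in_cV[OF T 0] preds_cg[OF T 0] val_inp L_in[OF T 0] by auto
next
  case (Suc j)
  have "val (cg T (Suc j)) = val (ci (L T ! Suc j)) + val (cg T j)"
    using val_gate cg_in_cV[OF T Suc.prems] preds_cg[OF T Suc.prems] by auto
  then show ?case using val_inp L_in[OF T Suc.prems] Suc by simp
qed

lemma cout_last_gate:
  assumes "T \<in> \<T>"
  shows "cout T = cg T (length (L T) - 1)" "length (L T) - 1 < length (L T)"
    "{..length (L T) - 1} = {..<length (L T)}"
proof -
  obtain k where "length (L T) = Suc k" using length_L_pos[OF assms] gr0_implies_Suc by blast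
  then show "cout T = cg T (length (L T) - 1)" "length (L T) - 1 < length (L T)"
    "{..length (L T) - 1} = {..<length (L T)}"
    by (simp_all add: cout_def lessThan_Suc_atMost)
qed

lemma computes_or_chain: "computes_or I \<T> cV cE ci cout"
  unfolding computes_or_def
proof (intro allI impI ballI)
  fix x :: "'p \<Rightarrow> bool" and val :: "nat \<Rightarrow> bool" and T
  assume val: "(\<forall>p\<in>I. val (ci p) = x p) \<and>
      (\<forall>g\<in>cV. (\<exists>u. (u, g) \<in> cE) \<longrightarrow> val g = (\<exists>u. (u, g) \<in> cE \<and> val u))"
    and T: "T \<in> \<T>"
  have "val (cout T) = (\<exists>i<length (L T). x (L T ! i))"
    using cg_value_or[OF conjunct1[OF val] conjunct2[OF val] T cout_last_gate(2)[OF T]]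
      cout_last_gate(1,3)[OF T] by (simp add: set_eq_iff)
  also have "\<dots> = (\<exists>p\<in>set (L T). x p)" by (auto simp: in_set_conv_nth intro: nth_mem)
  finally show "val (cout T) = (\<exists>p\<in>T. x p)" using set_L[OF T] by simp
qed

lemma computes_sum_chain: "computes_sum I \<T> cV cE ci cout"
  unfolding computes_sum_def
proof (intro allI impI ballI)
  fix x :: "'p \<Rightarrow> nat" and val :: "nat \<Rightarrow> nat" and T
  assume val: "(\<forall>p\<in>I. val (ci p) = x p) \<and>
      (\<forall>g\<in>cV. (\<exists>u. (u, g) \<in> cE) \<longrightarrow> val g = (\<Sum>u\<in>{u. (u, g) \<in> cE}. val u))"
    and T: "T \<in> \<T>"
  have "val (cout T) = (\<Sum>i<length (L T). x (L T ! i))"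
    using cg_value_sum[OF conjunct1[OF val] conjunct2[OF val] T cout_last_gate(2)[OF T]]
      cout_last_gate(1,3)[OF T] by simp
  also have "\<dots> = (\<Sum>p\<in>T. x p)"
    using sum.reindex_bij_betw[OF bij_betw_nth[OF distinct_L[OF T] refl refl]] set_L[OF T]
    by simp
  finally show "val (cout T) = (\<Sum>p\<in>T. x p)" .
qed

end

lemma pattern_set_chain_circuit:
  fixes I :: "'p set"
  assumes "pattern_set I \<T>"
  obtains V E inp out where "is_circuit I \<T> V E inp out" "fanin_le2 V E"
    "computes_or I \<T> V E inp out" "computes_sum I \<T> V E inp out"
proof -
  have "finite I" "finite \<T>" using assms by (simp_all add: pattern_set_def)
  then obtain e :: "'p \<Rightarrow> nat" and t :: "'p set \<Rightarrow> nat" where "inj_on e I" "inj_on t \<T>"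
    by (meson finite_imp_inj_to_nat_seg)
  then interpret chain_construction I \<T> e t
    using assms by unfold_locales
  show ?thesis
    by (rule that[OF is_circuit_chain fanin_le2_chain computes_or_chain computes_sum_chain])
qed

context
  fixes I I0 :: "'p set" and \<T> :: "'p set set"
  assumes pattern_set: "pattern_set I \<T>" and I0_subset: "I0 \<subseteq> I"
    and patterns_meet_I0: "\<forall>T\<in>\<T>. T \<inter> I0 \<noteq> {}"
begin

lemma patterns_finite: "\<forall>T\<in>\<T>. finite T"
proof
  fix T assume "T \<in> \<T>"
  then have "T \<subseteq> I" "finite I" using pattern_set by (auto simp: pattern_set_def)
  then show "finite T" by (rule finite_subset)
qed

lemma OR_cc_restriction_le: "OR_cc I0 ((\<lambda>T. T \<inter> I0) ` \<T>) \<le> OR_cc I \<T>"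
  unfolding OR_cc_def
proof (rule Least_le_Least)
  obtain V E inp out where "is_circuit I \<T> V E inp out" "fanin_le2 V E"
    "computes_or I \<T> V E inp out" "computes_sum I \<T> V E inp out"
    using pattern_set by (rule pattern_set_chain_circuit)
  then show "\<exists>s V E inp out.
      is_circuit I \<T> V E inp out \<and> computes_or I \<T> V E inp out \<and> s = card E"
    by blast
next
  fix s
  assume "\<exists>V E inp out. is_circuit I \<T> V E inp out \<and> computes_or I \<T> V E inp out \<and> s = card E"
  then obtain V E inp out where c: "is_circuit I \<T> V E inp out"
    and computes: "computes_or I \<T> V E inp out" and s: "s = card E" by blast
  interpret circuit_restriction I \<T> V E inp out I0 using c I0_subset by unfold_locales
  have reached: "out ` \<T> \<subseteq> reached"
    using computes patterns_meet_I0 by (rule outputs_reached_if_computes_or)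
  have cost: "card restricted_E \<le> s" using card_restricted_E_le s by simp
  show "\<exists>r\<le>s. \<exists>V E inp out. is_circuit I0 ((\<lambda>T. T \<inter> I0) ` \<T>) V E inp out \<and>
      computes_or I0 ((\<lambda>T. T \<inter> I0) ` \<T>) V E inp out \<and> r = card E"
    using is_circuit_restricted[OF reached] computes_or_restricted[OF reached computes] cost
    by blast
qed

lemma SUM_cc_restriction_le: "SUM_cc I0 ((\<lambda>T. T \<inter> I0) ` \<T>) \<le> SUM_cc I \<T>"
  unfolding SUM_cc_def
proof (rule Least_le_Least)
  obtain V E inp out where "is_circuit I \<T> V E inp out" "fanin_le2 V E"
    "computes_or I \<T> V E inp out" "computes_sum I \<T> V E inp out"
    using pattern_set by (rule pattern_set_chain_circuit)
  then show "\<exists>s V E inp out.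
      is_circuit I \<T> V E inp out \<and> computes_sum I \<T> V E inp out \<and> s = card E"
    by blast
next
  fix s
  assume "\<exists>V E inp out. is_circuit I \<T> V E inp out \<and> computes_sum I \<T> V E inp out \<and> s = card E"
  then obtain V E inp out where c: "is_circuit I \<T> V E inp out"
    and computes: "computes_sum I \<T> V E inp out" and s: "s = card E" by blast
  interpret circuit_restriction I \<T> V E inp out I0 using c I0_subset by unfold_locales
  have reached: "out ` \<T> \<subseteq> reached"
    using computes patterns_meet_I0 patterns_finite by (rule outputs_reached_if_computes_sum)
  have cost: "card restricted_E \<le> s" using card_restricted_E_le s by simp
  show "\<exists>r\<le>s. \<exists>V E inp out. is_circuit I0 ((\<lambda>T. T \<inter> I0) ` \<T>) V E inp out \<and>
      computes_sum I0 ((\<lambda>T. T \<inter> I0) ` \<T>) V E inp out \<and> r = card E"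
    using is_circuit_restricted[OF reached]
      computes_sum_restricted[OF reached computes patterns_finite]
      cost
    by blast
qed

lemma OR2_cc_restriction_le: "OR2_cc I0 ((\<lambda>T. T \<inter> I0) ` \<T>) \<le> OR2_cc I \<T>"
  unfolding OR2_cc_def
proof (rule Least_le_Least)
  obtain V E inp out where "is_circuit I \<T> V E inp out" "fanin_le2 V E"
    "computes_or I \<T> V E inp out" "computes_sum I \<T> V E inp out"
    using pattern_set by (rule pattern_set_chain_circuit)
  then show "\<exists>s V E inp out. is_circuit I \<T> V E inp out \<and> fanin_le2 V E \<and>
      computes_or I \<T> V E inp out \<and> s = num_gates V E"
    by blast
next
  fix s assume "\<exists>V E inp out. is_circuit I \<T> V E inp out \<and> fanin_le2 V E \<and>
      computes_or I \<T> V E inp out \<and> s = num_gates V E"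
  then obtain V E inp out where c: "is_circuit I \<T> V E inp out" and fanin: "fanin_le2 V E"
    and computes: "computes_or I \<T> V E inp out" and s: "s = num_gates V E"
    by blast
  interpret circuit_restriction I \<T> V E inp out I0 using c I0_subset by unfold_locales
  have reached: "out ` \<T> \<subseteq> reached"
    using computes patterns_meet_I0 by (rule outputs_reached_if_computes_or)
  have cost: "num_gates restricted_V restricted_E \<le> s" using num_gates_restricted_le s by simp
  show "\<exists>r\<le>s. \<exists>V E inp out. is_circuit I0 ((\<lambda>T. T \<inter> I0) ` \<T>) V E inp out \<and> fanin_le2 V E \<and>
      computes_or I0 ((\<lambda>T. T \<inter> I0) ` \<T>) V E inp out \<and> r = num_gates V E"
    using is_circuit_restricted[OF reached] computes_or_restricted[OF reached computes]
      fanin_le2_restricted[OF fanin] cost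
    by blast
qed

lemma SUM2_cc_restriction_le: "SUM2_cc I0 ((\<lambda>T. T \<inter> I0) ` \<T>) \<le> SUM2_cc I \<T>"
  unfolding SUM2_cc_def
proof (rule Least_le_Least)
  obtain V E inp out where "is_circuit I \<T> V E inp out" "fanin_le2 V E"
    "computes_or I \<T> V E inp out" "computes_sum I \<T> V E inp out"
    using pattern_set by (rule pattern_set_chain_circuit)
  then show "\<exists>s V E inp out. is_circuit I \<T> V E inp out \<and> fanin_le2 V E \<and>
      computes_sum I \<T> V E inp out \<and> s = num_gates V E"
    by blast
next
  fix s assume "\<exists>V E inp out. is_circuit I \<T> V E inp out \<and> fanin_le2 V E \<and>
      computes_sum I \<T> V E inp out \<and> s = num_gates V E"
  then obtain V E inp out where c: "is_circuit I \<T> V E inp out" and fanin: "fanin_le2 V E"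
    and computes: "computes_sum I \<T> V E inp out" and s: "s = num_gates V E"
    by blast
  interpret circuit_restriction I \<T> V E inp out I0 using c I0_subset by unfold_locales
  have reached: "out ` \<T> \<subseteq> reached"
    using computes patterns_meet_I0 patterns_finite by (rule outputs_reached_if_computes_sum)
  have cost: "num_gates restricted_V restricted_E \<le> s" using num_gates_restricted_le s by simp
  show "\<exists>r\<le>s. \<exists>V E inp out. is_circuit I0 ((\<lambda>T. T \<inter> I0) ` \<T>) V E inp out \<and> fanin_le2 V E \<and>
      computes_sum I0 ((\<lambda>T. T \<inter> I0) ` \<T>) V E inp out \<and> r = num_gates V E"
    using is_circuit_restricted[OF reached]
      computes_sum_restricted[OF reached computes patterns_finite]
      fanin_le2_restricted[OF fanin] cost
    by blast
qed

end

theorem proposition4: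
  fixes I I0 :: "'p set" and \<T> :: "'p set set"
  assumes "pattern_set I \<T>"
    and "I0 \<subseteq> I"
    and "pattern_set I0 ((\<lambda>T. T \<inter> I0) ` \<T>)"
  shows "OR_cc I0 ((\<lambda>T. T \<inter> I0) ` \<T>) \<le> OR_cc I \<T> \<and>
         SUM_cc I0 ((\<lambda>T. T \<inter> I0) ` \<T>) \<le> SUM_cc I \<T> \<and>
         OR2_cc I0 ((\<lambda>T. T \<inter> I0) ` \<T>) \<le> OR2_cc I \<T> \<and>
         SUM2_cc I0 ((\<lambda>T. T \<inter> I0) ` \<T>) \<le> SUM2_cc I \<T>"
proof -
  have meets: "\<forall>T\<in>\<T>. T \<inter> I0 \<noteq> {}"
    using assms(3) unfolding pattern_set_def by blast
  show ?thesis
    using assms(1,2) meets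
    by (intro conjI OR_cc_restriction_le SUM_cc_restriction_le
        OR2_cc_restriction_le SUM2_cc_restriction_le)
qed

end
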